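(* Let $\alpha,\beta$ be real (or complex) parameters, let $n,p$ be non-negative integers ($p\ge1$), and let $k_1,\ldots,k_p$ be non-negative integers with $k=k_1+\cdots+k_p$. Then $$\binom{k}{k_1,\ldots,k_p}\genfrac{\lfloor}{\rfloor}{0pt}{}{n}{k}^{\alpha,\beta}=\sum_{\substack{l_1+\cdots+l_p=n\\ l_i\ge0}}\binom{n}{l_1,\ldots,l_p}\genfrac{\lfloor}{\rfloor}{0pt}{}{l_1}{k_1}^{\alpha,\beta}\cdots\genfrac{\lfloor}{\rfloor}{0pt}{}{l_p}{k_p}^{\alpha,\beta}.$$
   Context: For parameters $\alpha,\beta$, the generalized Stirling numbers $\genfrac{\lfloor}{\rfloor}{0pt}{}{n}{k}^{\alpha,\beta}$, $0\le k\le n$, are defined by the polynomial identity in $x$ $$x(x+\alpha)\cdots(x+(n-1)\alpha)=\sum_{k=0}^{n}\genfrac{\lfloor}{\rfloor}{0pt}{}{n}{k}^{\alpha,\beta}\,x(x-\beta)\cdots(x-(k-1)\beta),$$ (empty products equal $1$), and $\genfrac{\lfloor}{\rfloor}{0pt}{}{n}{k}^{\alpha,\beta}=0$ for $k<0$ or $k>n$. $\binom{m}{m_1,\ldots,m_p}=\frac{m!}{m_1!\cdots m_p!}$ denotes the multinomial coefficient. *)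

theory Defs
  imports "HOL-Computational_Algebra.Polynomial"
begin

definition rise_poly :: "'a::field \<Rightarrow> nat \<Rightarrow> 'a poly" where
  "rise_poly a n = (\<Prod>i<n. [:of_nat i * a, 1:])"

definition fall_poly :: "'a::field \<Rightarrow> nat \<Rightarrow> 'a poly" where
  "fall_poly b k = (\<Prod>i<k. [:- (of_nat i * b), 1:])"

definition gen_stirling :: "'a::field \<Rightarrow> 'a \<Rightarrow> nat \<Rightarrow> nat \<Rightarrow> 'a" where
  "gen_stirling a b n k =
     (THE c. (\<forall>j>n. c j = 0) \<and>
             rise_poly a n = (\<Sum>j\<le>n. smult (c j) (fall_poly b j))) k"

definition multinomial :: "nat \<Rightarrow> nat list \<Rightarrow> nat" where
  "multinomial m ms = fact m div (\<Prod>x\<leftarrow>ms. fact x)"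

end

theory Submission
  imports Defs
begin

text \<open>Multiplying the expansion of the rising product by \<open>x + n\<alpha> = (x - k\<beta>) + (k\<beta> + n\<alpha>)\<close>
  gives the triangular recurrence
  \<open>S(n+1, k) = S(n, k-1) + (k\<beta> + n\<alpha>) S(n, k)\<close>, which determines the generalized Stirling
  numbers since the falling products form a basis. For two blocks, both
  \<open>binom(k\<^sub>1+k\<^sub>2, k\<^sub>1) S(n, k\<^sub>1+k\<^sub>2)\<close> and the binomial convolution
  \<open>\<Sum>\<^sub>l binom(n, l) S(l, k\<^sub>1) S(n-l, k\<^sub>2)\<close> satisfy the same recurrence in \<open>n\<close>, by Pascal's rule
  on either side. The general case follows by induction on the number of blocks, splitting off
  the first one with \<open>multinomial(l # ls) = binom(n, l) multinomial(ls)\<close>.\<close>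

fun gen_stirling_rec :: "'a::field \<Rightarrow> 'a \<Rightarrow> nat \<Rightarrow> nat \<Rightarrow> 'a" where
  "gen_stirling_rec a b 0 k = (if k = 0 then 1 else 0)"
| "gen_stirling_rec a b (Suc n) k =
     (if k = 0 then 0 else gen_stirling_rec a b n (k - 1))
     + (of_nat k * b + of_nat n * a) * gen_stirling_rec a b n k"

lemma gen_stirling_rec_eq_0: "n < k \<Longrightarrow> gen_stirling_rec a b n k = 0"
  by (induction n arbitrary: k) auto

lemma degree_fall_poly [simp]: "degree (fall_poly b k) = k"
  by (simp add: fall_poly_def degree_prod_sum_eq)

lemma fall_poly_nonzero [simp]: "fall_poly b k \<noteq> 0"
  by (simp add: fall_poly_def)

lemma sum_smult_eq_0_imp_eq_0:
  fixes f :: "nat \<Rightarrow> 'a::idom poly"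
  assumes "\<And>j. j \<le> n \<Longrightarrow> degree (f j) = j" and "\<And>j. j \<le> n \<Longrightarrow> f j \<noteq> 0"
    and "(\<Sum>j\<le>n. smult (c j) (f j)) = 0" and "j \<le> n"
  shows "c j = 0"
  using assms
proof (induction n arbitrary: j)
  case 0
  then show ?case by simp
next
  case (Suc n)
  have "coeff (smult (c j) (f j)) (Suc n) = 0" if "j \<le> n" for j
    using Suc.prems(1)[of j] that by (simp add: coeff_eq_0)
  then have "coeff (\<Sum>j\<le>n. smult (c j) (f j)) (Suc n) = 0"
    unfolding coeff_sum by (auto intro!: sum.neutral)
  then have "coeff (\<Sum>j\<le>Suc n. smult (c j) (f j)) (Suc n) = c (Suc n) * lead_coeff (f (Suc n))"
    using Suc.prems(1) by simp
  then have "c (Suc n) * lead_coeff (f (Suc n)) = 0"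
    using Suc.prems(3) by (metis coeff_0)
  then have c_Suc: "c (Suc n) = 0"
    using Suc.prems(2) by simp
  with Suc.prems(3) have "(\<Sum>j\<le>n. smult (c j) (f j)) = 0"
    by simp
  with Suc.prems Suc.IH c_Suc show ?case
    by (cases "j = Suc n") auto
qed

lemma fall_poly_mult_linear:
  "fall_poly b j * [:c, 1:] = fall_poly b (Suc j) + smult (c + of_nat j * b) (fall_poly b j)"
  by (simp add: fall_poly_def algebra_simps smult_add_left)

lemma rise_poly_eq_sum_fall_poly:
  "rise_poly a n = (\<Sum>j\<le>n. smult (gen_stirling_rec a b n j) (fall_poly b j))"
proof (induction n)
  case 0
  then show ?case by (simp add: rise_poly_def fall_poly_def)
next
  case (Suc n)
  let ?S = "gen_stirling_rec a b n" and ?w = "\<lambda>j. of_nat j * b + of_nat n * a"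
  have "rise_poly a (Suc n) = (\<Sum>j\<le>n. smult (?S j) (fall_poly b j * [:of_nat n * a, 1:]))"
    by (simp add: rise_poly_def Suc[unfolded rise_poly_def] sum_distrib_right del: mult_pCons_right)
  also have "\<dots> = (\<Sum>j\<le>n. smult (?S j) (fall_poly b (Suc j)))
      + (\<Sum>j\<le>n. smult (?w j * ?S j) (fall_poly b j))"
    by (simp add: fall_poly_mult_linear sum.distrib smult_add_right algebra_simps
        del: mult_pCons_right)
  also have "(\<Sum>j\<le>n. smult (?S j) (fall_poly b (Suc j)))
      = (\<Sum>j\<le>Suc n. smult (if j = 0 then 0 else ?S (j - 1)) (fall_poly b j))"
    by (simp add: sum.atMost_Suc_shift del: sum.atMost_Suc)
  also have "(\<Sum>j\<le>n. smult (?w j * ?S j) (fall_poly b j))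
      = (\<Sum>j\<le>Suc n. smult (?w j * ?S j) (fall_poly b j))"
    by (simp add: gen_stirling_rec_eq_0)
  finally show ?case
    by (simp add: sum.distrib[symmetric] smult_add_left del: sum.atMost_Suc)
qed

lemma gen_stirling_eq_rec: "gen_stirling a b n k = gen_stirling_rec a b n k"
proof -
  let ?expands = "\<lambda>c. (\<forall>j>n. c j = 0) \<and> rise_poly a n = (\<Sum>j\<le>n. smult (c j) (fall_poly b j))"
  have "(THE c. ?expands c) = gen_stirling_rec a b n"
  proof (rule the_equality)
    show "?expands (gen_stirling_rec a b n)"
      using gen_stirling_rec_eq_0 rise_poly_eq_sum_fall_poly by blast
  next
    fix c assume c: "?expands c"
    then have "(\<Sum>j\<le>n. smult (c j - gen_stirling_rec a b n j) (fall_poly b j)) = 0"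
      using rise_poly_eq_sum_fall_poly[of a n b] by (simp add: smult_diff_left sum_subtractf)
    then have "c j = gen_stirling_rec a b n j" if "j \<le> n" for j
      using sum_smult_eq_0_imp_eq_0[of n "fall_poly b"] that by fastforce
    with c show "c = gen_stirling_rec a b n"
      by (metis ext not_le gen_stirling_rec_eq_0)
  qed
  then show ?thesis
    unfolding gen_stirling_def by simp
qed

lemma gen_stirling_0 [simp]: "gen_stirling a b 0 k = (if k = 0 then 1 else 0)"
  by (simp add: gen_stirling_eq_rec)

lemma gen_stirling_Suc:
  "gen_stirling a b (Suc n) k =
     (if k = 0 then 0 else gen_stirling a b n (k - 1))
     + (of_nat k * b + of_nat n * a) * gen_stirling a b n k"
  by (simp add: gen_stirling_eq_rec)

lemma gen_stirling_0_right: "gen_stirling a b n 0 = (if n = 0 then 1 else 0)"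
  by (induction n) (simp_all add: gen_stirling_Suc)

lemma sum_choose_Suc_mult:
  fixes F :: "nat \<Rightarrow> 'a::comm_semiring_1"
  shows "(\<Sum>l\<le>Suc n. of_nat (Suc n choose l) * F l)
       = (\<Sum>l\<le>n. of_nat (n choose l) * (F (Suc l) + F l))"
proof -
  have "(\<Sum>l\<le>Suc n. of_nat (Suc n choose l) * F l)
      = (\<Sum>l\<le>n. of_nat (n choose l) * F (Suc l))
        + (F 0 + (\<Sum>l\<le>n. of_nat (n choose Suc l) * F (Suc l)))"
    by (simp add: sum.atMost_Suc_shift algebra_simps sum.distrib del: sum.atMost_Suc)
  also have "F 0 + (\<Sum>l\<le>n. of_nat (n choose Suc l) * F (Suc l))
      = (\<Sum>l\<le>Suc n. of_nat (n choose l) * F l)"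
    by (simp add: sum.atMost_Suc_shift del: sum.atMost_Suc)
  also have "\<dots> = (\<Sum>l\<le>n. of_nat (n choose l) * F l)"
    by (simp add: binomial_eq_0)
  finally show ?thesis
    by (simp add: algebra_simps sum.distrib)
qed

definition gen_stirling_conv :: "'a::field \<Rightarrow> 'a \<Rightarrow> nat \<Rightarrow> nat \<Rightarrow> nat \<Rightarrow> 'a" where
  "gen_stirling_conv a b n k\<^sub>1 k\<^sub>2 =
     (\<Sum>l\<le>n. of_nat (n choose l) * (gen_stirling a b l k\<^sub>1 * gen_stirling a b (n - l) k\<^sub>2))"

lemma gen_stirling_conv_0 [simp]:
  "gen_stirling_conv a b 0 k\<^sub>1 k\<^sub>2 = (if k\<^sub>1 = 0 \<and> k\<^sub>2 = 0 then 1 else 0)"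
  by (simp add: gen_stirling_conv_def)

lemma gen_stirling_conv_Suc:
  "gen_stirling_conv a b (Suc n) k\<^sub>1 k\<^sub>2 =
     (if k\<^sub>1 = 0 then 0 else gen_stirling_conv a b n (k\<^sub>1 - 1) k\<^sub>2)
     + (if k\<^sub>2 = 0 then 0 else gen_stirling_conv a b n k\<^sub>1 (k\<^sub>2 - 1))
     + (of_nat (k\<^sub>1 + k\<^sub>2) * b + of_nat n * a) * gen_stirling_conv a b n k\<^sub>1 k\<^sub>2"
proof -
  let ?S = "gen_stirling a b" and ?c = "\<lambda>l. of_nat (n choose l)"
  define D where "D m k = (if k = 0 then 0 else ?S m (k - 1))" for m k
  have "?c l * (?S (Suc l) k\<^sub>1 * ?S (Suc n - Suc l) k\<^sub>2 + ?S l k\<^sub>1 * ?S (Suc n - l) k\<^sub>2)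
      = ?c l * (D l k\<^sub>1 * ?S (n - l) k\<^sub>2) + ?c l * (?S l k\<^sub>1 * D (n - l) k\<^sub>2)
        + (of_nat (k\<^sub>1 + k\<^sub>2) * b + of_nat n * a) * (?c l * (?S l k\<^sub>1 * ?S (n - l) k\<^sub>2))"
    if "l \<le> n" for l
  proof -
    have "Suc n - l = Suc (n - l)" and "(of_nat (n - l) :: 'a) = of_nat n - of_nat l"
      using that by (simp_all add: of_nat_diff)
    then show ?thesis
      by (simp add: gen_stirling_Suc D_def algebra_simps)
  qed
  then have "gen_stirling_conv a b (Suc n) k\<^sub>1 k\<^sub>2
      = (\<Sum>l\<le>n. ?c l * (D l k\<^sub>1 * ?S (n - l) k\<^sub>2)) + (\<Sum>l\<le>n. ?c l * (?S l k\<^sub>1 * D (n - l) k\<^sub>2))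
        + (of_nat (k\<^sub>1 + k\<^sub>2) * b + of_nat n * a) * gen_stirling_conv a b n k\<^sub>1 k\<^sub>2"
    unfolding gen_stirling_conv_def sum_choose_Suc_mult
    by (simp add: sum.distrib sum_distrib_left)
  then show ?thesis
    by (cases k\<^sub>1; cases k\<^sub>2) (simp_all add: D_def gen_stirling_conv_def)
qed

lemma choose_mult_gen_stirling_Suc:
  "of_nat ((k\<^sub>1 + k\<^sub>2) choose k\<^sub>1) * gen_stirling a b (Suc n) (k\<^sub>1 + k\<^sub>2) =
     (if k\<^sub>1 = 0 then 0
      else of_nat ((k\<^sub>1 - 1 + k\<^sub>2) choose (k\<^sub>1 - 1)) * gen_stirling a b n (k\<^sub>1 - 1 + k\<^sub>2))
     + (if k\<^sub>2 = 0 then 0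
        else of_nat ((k\<^sub>1 + (k\<^sub>2 - 1)) choose k\<^sub>1) * gen_stirling a b n (k\<^sub>1 + (k\<^sub>2 - 1)))
     + (of_nat (k\<^sub>1 + k\<^sub>2) * b + of_nat n * a)
       * (of_nat ((k\<^sub>1 + k\<^sub>2) choose k\<^sub>1) * gen_stirling a b n (k\<^sub>1 + k\<^sub>2))"
proof (cases k\<^sub>1; cases k\<^sub>2)
  fix j\<^sub>1 j\<^sub>2 assume k: "k\<^sub>1 = Suc j\<^sub>1" "k\<^sub>2 = Suc j\<^sub>2"
  then have "(k\<^sub>1 + k\<^sub>2) choose k\<^sub>1 = ((j\<^sub>1 + Suc j\<^sub>2) choose j\<^sub>1) + ((j\<^sub>1 + Suc j\<^sub>2) choose Suc j\<^sub>1)"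
    by simp
  with k show ?thesis
    by (simp add: gen_stirling_Suc algebra_simps)
qed (simp_all add: gen_stirling_Suc algebra_simps)

lemma choose_mult_gen_stirling_eq_conv:
  "of_nat ((k\<^sub>1 + k\<^sub>2) choose k\<^sub>1) * gen_stirling a b n (k\<^sub>1 + k\<^sub>2) = gen_stirling_conv a b n k\<^sub>1 k\<^sub>2"
proof (induction n arbitrary: k\<^sub>1 k\<^sub>2)
  case 0
  then show ?case by simp
next
  case (Suc n)
  show ?case
    unfolding choose_mult_gen_stirling_Suc gen_stirling_conv_Suc
    by (simp flip: Suc.IH)
qed

lemma fact_add_eq_choose_mult_fact: "fact (l + m) = ((l + m) choose l) * fact l * (fact m :: nat)"
  using binomial_fact_lemma[of l "l + m"] by (simp add: algebra_simps)

lemma prod_list_fact_dvd_fact_sum_list: "(\<Prod>x\<leftarrow>ls. fact x) dvd (fact (sum_list ls) :: nat)"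
  by (induction ls) (simp_all add: fact_add_eq_choose_mult_fact mult_dvd_mono)

lemma multinomial_Cons:
  "multinomial (l + sum_list ls) (l # ls) = ((l + sum_list ls) choose l) * multinomial (sum_list ls) ls"
proof -
  define P where "P = (\<Prod>x\<leftarrow>ls. fact x :: nat)"
  have "P > 0"
    unfolding P_def by (induction ls) auto
  obtain m where m: "fact (sum_list ls) = m * P"
    using prod_list_fact_dvd_fact_sum_list[of ls] unfolding P_def by (metis dvdE mult.commute)
  have "multinomial (l + sum_list ls) (l # ls)
      = (((l + sum_list ls) choose l) * m) * (fact l * P) div (fact l * P)"
    unfolding multinomial_def by (simp add: P_def[symmetric] fact_add_eq_choose_mult_fact m algebra_simps)
  also have "\<dots> = ((l + sum_list ls) choose l) * m"
    using \<open>P > 0\<close> by simp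
  finally show ?thesis
    unfolding multinomial_def using \<open>P > 0\<close> by (simp add: m P_def)
qed

abbreviation weak_compositions :: "nat \<Rightarrow> nat \<Rightarrow> nat list set" where
  "weak_compositions p n \<equiv> {ls. length ls = p \<and> sum_list ls = n}"

lemma finite_weak_compositions: "finite (weak_compositions p n)"
proof (rule finite_subset)
  show "weak_compositions p n \<subseteq> {ls. set ls \<subseteq> {..n} \<and> length ls = p}"
    using member_le_sum_list by fastforce
  show "finite {ls. set ls \<subseteq> {..n} \<and> length ls = p}"
    by (rule finite_lists_length_eq) simp
qed

lemma weak_compositions_0: "weak_compositions 0 n = (if n = 0 then {[]} else {})"
  by auto

lemma weak_compositions_Suc:
  "weak_compositions (Suc p) n = (\<lambda>(l, ls). l # ls) ` (SIGMA l:{..n}. weak_compositions p (n - l))"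
proof (rule set_eqI)
  fix xs :: "nat list"
  show "xs \<in> weak_compositions (Suc p) n \<longleftrightarrow>
        xs \<in> (\<lambda>(l, ls). l # ls) ` (SIGMA l:{..n}. weak_compositions p (n - l))"
    by (cases xs) auto
qed

lemma sum_weak_compositions_Suc:
  "(\<Sum>ls\<in>weak_compositions (Suc p) n. f ls) = (\<Sum>l\<le>n. \<Sum>ls\<in>weak_compositions p (n - l). f (l # ls))"
proof -
  have "inj_on (\<lambda>(l, ls). l # ls) X" for X :: "(nat \<times> nat list) set"
    by (auto simp: inj_on_def)
  then show ?thesis
    unfolding weak_compositions_Suc
    by (simp add: sum.reindex sum.Sigma finite_weak_compositions split_def)
qed

lemma multinomial_mult_gen_stirling_eq_sum:
  "of_nat (multinomial (sum_list ks) ks) * gen_stirling a b n (sum_list ks) =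
     (\<Sum>ls\<in>weak_compositions (length ks) n.
        of_nat (multinomial n ls) * (\<Prod>i<length ks. gen_stirling a b (ls ! i) (ks ! i)))"
proof (induction ks arbitrary: n)
  case Nil
  show ?case
    unfolding list.size(3) weak_compositions_0 by (simp add: gen_stirling_0_right)
next
  case (Cons k ks)
  let ?S = "gen_stirling a b" and ?K = "sum_list ks" and ?p = "length ks"
  let ?P = "\<lambda>ls. \<Prod>i<?p. ?S (ls ! i) (ks ! i)"
  have "(\<Sum>ls\<in>weak_compositions (length (k # ks)) n.
          of_nat (multinomial n ls) * (\<Prod>i<length (k # ks). ?S (ls ! i) ((k # ks) ! i)))
      = (\<Sum>l\<le>n. \<Sum>ls\<in>weak_compositions ?p (n - l).
          of_nat (multinomial n (l # ls)) * (?S l k * ?P ls))"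
    by (simp add: sum_weak_compositions_Suc prod.lessThan_Suc_shift del: prod.lessThan_Suc
        cong: sum.cong)
  also have "\<dots> = (\<Sum>l\<le>n. of_nat (n choose l) * ?S l k *
       (\<Sum>ls\<in>weak_compositions ?p (n - l). of_nat (multinomial (n - l) ls) * ?P ls))"
    unfolding sum_distrib_left
  proof (intro sum.cong refl)
    fix l ls assume "l \<in> {..n}" and "ls \<in> weak_compositions ?p (n - l)"
    then have "n = l + sum_list ls"
      by auto
    then show "of_nat (multinomial n (l # ls)) * (?S l k * ?P ls)
        = of_nat (n choose l) * ?S l k * (of_nat (multinomial (n - l) ls) * ?P ls)"
      by (simp add: multinomial_Cons)
  qed
  also have "\<dots> = of_nat (multinomial ?K ks) * gen_stirling_conv a b n k ?K"
    by (simp add: Cons.IH gen_stirling_conv_def sum_distrib_left algebra_simps)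
  also have "\<dots> = of_nat (multinomial (sum_list (k # ks)) (k # ks)) * ?S n (sum_list (k # ks))"
    by (simp add: multinomial_Cons flip: choose_mult_gen_stirling_eq_conv)
  finally show ?case ..
qed

theorem theorem7:
  fixes \<alpha> \<beta> :: "'a::field_char_0" and n p :: nat and ks :: "nat list"
  assumes "p \<ge> 1" and "length ks = p"
  shows "of_nat (multinomial (sum_list ks) ks) * gen_stirling \<alpha> \<beta> n (sum_list ks) =
    (\<Sum>ls\<in>{ls. length ls = p \<and> sum_list ls = n}.
       of_nat (multinomial n ls) * (\<Prod>i<p. gen_stirling \<alpha> \<beta> (ls ! i) (ks ! i)))"
  using multinomial_mult_gen_stirling_eq_sum[of ks \<alpha> \<beta> n] assms(2) by simp

end
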